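(* Let $G$ be a finite simple graph with $n=|V(G)|$, and let $v_1,\dots,v_r$, $r\ge 2$, be a $\beta$-sequence in $G$ such that $N(v_1,\dots,v_{r-1})$ is a $\delta$-set in $G$. Then $r\ge W(G)$.
   Context: Graphs are finite, undirected, without loops or multiple edges; $N(v)$ is the set of vertices adjacent to $v$, $d(v)=|N(v)|$, and $N(v_1,\dots,v_k)=\bigcap_{j=1}^k N(v_j)$. Define $W(G)=\sum_{v\in V(G)}\frac{1}{n-d(v)}$. A set $V\subseteq V(G)$ is a $\delta$-set in $G$ if $d(v)\le n-|V|$ for all $v\in V$. A sequence $v_1,\dots,v_r$ of vertices is a $\beta$-sequence in $G$ if (i) $d(v_1)=\max\{d(v)\mid v\in V(G)\}$, and (ii) for $2\le i\le r$, $v_i\in N(v_1,\dots,v_{i-1})$ and $d(v_i)=\max\{d(v)\mid v\in N(v_1,\dots,v_{i-1})\}$ (degrees taken in $G$). *)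

theory Defs
  imports Complex_Main
begin

definition simple_graph :: "'a set \<Rightarrow> ('a \<Rightarrow> 'a \<Rightarrow> bool) \<Rightarrow> bool" where
  "simple_graph V E \<longleftrightarrow> finite V \<and> (\<forall>u v. E u v \<longrightarrow> u \<in> V \<and> v \<in> V)
     \<and> (\<forall>u v. E u v \<longrightarrow> E v u) \<and> (\<forall>v. \<not> E v v)"

definition nbhd :: "'a set \<Rightarrow> ('a \<Rightarrow> 'a \<Rightarrow> bool) \<Rightarrow> 'a \<Rightarrow> 'a set" where
  "nbhd V E v = {u \<in> V. E v u}"

definition deg :: "'a set \<Rightarrow> ('a \<Rightarrow> 'a \<Rightarrow> bool) \<Rightarrow> 'a \<Rightarrow> nat" where
  "deg V E v = card (nbhd V E v)"

definition common_nbhd :: "'a set \<Rightarrow> ('a \<Rightarrow> 'a \<Rightarrow> bool) \<Rightarrow> 'a list \<Rightarrow> 'a set" where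
  "common_nbhd V E vs = (\<Inter>v\<in>set vs. nbhd V E v)"

definition W :: "'a set \<Rightarrow> ('a \<Rightarrow> 'a \<Rightarrow> bool) \<Rightarrow> real" where
  "W V E = (\<Sum>v\<in>V. 1 / (real (card V) - real (deg V E v)))"

definition delta_set :: "'a set \<Rightarrow> ('a \<Rightarrow> 'a \<Rightarrow> bool) \<Rightarrow> 'a set \<Rightarrow> bool" where
  "delta_set V E S \<longleftrightarrow> S \<subseteq> V \<and> (\<forall>v\<in>S. deg V E v \<le> card V - card S)"

text \<open>beta-sequence v_1,...,v_r given as the list vs = [v_1,...,v_r]
(0-based: vs!0 = v_1).\<close>
definition beta_sequence :: "'a set \<Rightarrow> ('a \<Rightarrow> 'a \<Rightarrow> bool) \<Rightarrow> 'a list \<Rightarrow> bool" where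
  "beta_sequence V E vs \<longleftrightarrow> vs \<noteq> [] \<and>
     vs ! 0 \<in> V \<and> deg V E (vs ! 0) = Max (deg V E ` V) \<and>
     (\<forall>i. 1 \<le> i \<and> i < length vs \<longrightarrow>
        vs ! i \<in> common_nbhd V E (take i vs) \<and>
        deg V E (vs ! i) = Max (deg V E ` common_nbhd V E (take i vs)))"

end

theory Submission
  imports Defs
begin

text \<open>Split the sum \<open>W(G)\<close> along the chain \<open>V \<supseteq> N(v_1) \<supseteq> N(v_1,v_2) \<supseteq> \<dots> \<supseteq> S\<close>,
  \<open>S = N(v_1,\<dots>,v_{r-1})\<close>. Passing from \<open>X = N(v_1,\<dots>,v_{i-1})\<close> to \<open>X \<inter> N(v_i)\<close> drops the
  vertices of \<open>X - N(v_i)\<close>: there are at most \<open>n - d(v_i)\<close> of them and, \<open>v_i\<close> having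
  maximum degree in \<open>X\<close>, each contributes at most \<open>1/(n - d(v_i))\<close>, so at most 1 in total.
  The \<delta>-set \<open>S\<close> contributes at most 1 as well, each of its \<open>|S|\<close> terms being at most \<open>1/|S|\<close>.\<close>

definition W_on :: "'a set \<Rightarrow> ('a \<Rightarrow> 'a \<Rightarrow> bool) \<Rightarrow> 'a set \<Rightarrow> real" where
  "W_on V E X = (\<Sum>u\<in>X. 1 / (real (card V) - real (deg V E u)))"

lemma W_eq_W_on: "W V E = W_on V E V"
  by (simp add: W_def W_on_def)

lemma simple_graph_finite: "simple_graph V E \<Longrightarrow> finite V"
  by (simp add: simple_graph_def)

lemma deg_less_card:
  assumes "simple_graph V E" "v \<in> V"
  shows "deg V E v < card V"
proof -
  have fin: "finite V" using assms(1) by (rule simple_graph_finite)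
  have "nbhd V E v \<subseteq> V - {v}" using assms by (auto simp: nbhd_def simple_graph_def)
  hence "card (nbhd V E v) \<le> card (V - {v})" using fin by (intro card_mono) auto
  also have "\<dots> < card V" using fin assms(2) by (meson card_Diff1_less)
  finally show ?thesis by (simp add: deg_def)
qed

lemma card_diff_nbhd: "finite V \<Longrightarrow> card (V - nbhd V E v) = card V - deg V E v"
  by (simp add: deg_def card_Diff_subset nbhd_def)

lemma W_on_diff_nbhd_le_1:
  assumes G: "simple_graph V E" and X: "X \<subseteq> V" "v \<in> X"
    and max_deg: "\<forall>u\<in>X. deg V E u \<le> deg V E v"
  shows "W_on V E (X - nbhd V E v) \<le> 1"
proof -
  have fin: "finite V" using G by (rule simple_graph_finite)
  define D where "D = real (card V) - real (deg V E v)"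
  have deg_v: "deg V E v < card V" using deg_less_card[OF G] X by auto
  hence D_pos: "D > 0" by (simp add: D_def)
  have "W_on V E (X - nbhd V E v) \<le> (\<Sum>u\<in>X - nbhd V E v. 1 / D)"
    unfolding W_on_def
  proof (rule sum_mono)
    fix u assume "u \<in> X - nbhd V E v"
    hence "D \<le> real (card V) - real (deg V E u)" using max_deg by (auto simp: D_def)
    thus "1 / (real (card V) - real (deg V E u)) \<le> 1 / D"
      using D_pos by (intro divide_left_mono) auto
  qed
  also have "\<dots> = real (card (X - nbhd V E v)) / D" by simp
  also have "\<dots> \<le> 1"
  proof -
    have "card (X - nbhd V E v) \<le> card (V - nbhd V E v)"
      using fin X by (intro card_mono) auto
    hence "real (card (X - nbhd V E v)) \<le> D"
      using deg_v card_diff_nbhd[OF fin] by (simp add: D_def)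
    thus ?thesis using D_pos by simp
  qed
  finally show ?thesis .
qed

lemma W_on_le_1_plus_W_on_inter_nbhd:
  assumes G: "simple_graph V E" and X: "X \<subseteq> V" "v \<in> X"
    and max_deg: "\<forall>u\<in>X. deg V E u \<le> deg V E v"
  shows "W_on V E X \<le> 1 + W_on V E (X \<inter> nbhd V E v)"
proof -
  have "finite X" using simple_graph_finite[OF G] X finite_subset by blast
  hence "W_on V E X = W_on V E (X - nbhd V E v) + W_on V E (X \<inter> nbhd V E v)"
    unfolding W_on_def by (simp add: sum.Int_Diff[of X _ "nbhd V E v"])
  thus ?thesis using W_on_diff_nbhd_le_1[OF assms] by simp
qed

lemma W_on_delta_set_le_1:
  assumes G: "simple_graph V E" and S: "delta_set V E S"
  shows "W_on V E S \<le> 1"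
proof (cases "S = {}")
  case True
  thus ?thesis by (simp add: W_on_def)
next
  case False
  have fin: "finite V" using G by (rule simple_graph_finite)
  have sub: "S \<subseteq> V" using S by (simp add: delta_set_def)
  hence card_S: "card S \<le> card V" using fin by (simp add: card_mono)
  have card_pos: "card S > 0" using False sub fin by (simp add: card_gt_0_iff finite_subset)
  have "W_on V E S \<le> (\<Sum>u\<in>S. 1 / real (card S))"
    unfolding W_on_def
  proof (rule sum_mono)
    fix u assume "u \<in> S"
    hence "deg V E u \<le> card V - card S" using S by (simp add: delta_set_def)
    hence "real (card S) \<le> real (card V) - real (deg V E u)" using card_S by linarith
    thus "1 / (real (card V) - real (deg V E u)) \<le> 1 / real (card S)"
      using card_pos by (intro divide_left_mono) auto
  qed
  also have "\<dots> = 1" using card_pos by simp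
  finally show ?thesis .
qed

text \<open>Intersecting with \<open>V\<close> makes the prefix of length 0 give \<open>V\<close> rather than \<open>UNIV\<close>.\<close>

lemma common_nbhd_take_Suc:
  "k < length vs \<Longrightarrow>
    V \<inter> common_nbhd V E (take (Suc k) vs) = V \<inter> common_nbhd V E (take k vs) \<inter> nbhd V E (vs ! k)"
  by (auto simp: common_nbhd_def take_Suc_conv_app_nth)

lemma beta_sequence_max_deg:
  assumes G: "simple_graph V E" and B: "beta_sequence V E vs" and k: "k < length vs"
  shows "vs ! k \<in> V \<inter> common_nbhd V E (take k vs)"
    and "\<forall>u \<in> V \<inter> common_nbhd V E (take k vs). deg V E u \<le> deg V E (vs ! k)"
proof -
  have fin: "finite V" using G by (rule simple_graph_finite)
  have "vs ! k \<in> V \<inter> common_nbhd V E (take k vs) \<and>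
      deg V E (vs ! k) = Max (deg V E ` (V \<inter> common_nbhd V E (take k vs)))"
  proof (cases "k = 0")
    case True
    thus ?thesis using B by (simp add: beta_sequence_def common_nbhd_def)
  next
    case False
    have "common_nbhd V E (take k vs) \<subseteq> V"
      using False k by (auto simp: common_nbhd_def nbhd_def set_conv_nth)
    hence "V \<inter> common_nbhd V E (take k vs) = common_nbhd V E (take k vs)" by blast
    thus ?thesis using B False k by (simp add: beta_sequence_def)
  qed
  thus "vs ! k \<in> V \<inter> common_nbhd V E (take k vs)"
    and "\<forall>u \<in> V \<inter> common_nbhd V E (take k vs). deg V E u \<le> deg V E (vs ! k)"
    using fin by auto
qed

lemma W_le_prefix_bound:
  assumes G: "simple_graph V E" and B: "beta_sequence V E vs" and "k \<le> length vs"
  shows "W V E \<le> real k + W_on V E (V \<inter> common_nbhd V E (take k vs))"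
  using \<open>k \<le> length vs\<close>
proof (induction k)
  case 0
  show ?case by (simp add: W_eq_W_on common_nbhd_def)
next
  case (Suc k)
  hence k: "k < length vs" by simp
  have "W_on V E (V \<inter> common_nbhd V E (take k vs))
      \<le> 1 + W_on V E (V \<inter> common_nbhd V E (take (Suc k) vs))"
    unfolding common_nbhd_take_Suc[OF k]
    using beta_sequence_max_deg[OF G B k] by (intro W_on_le_1_plus_W_on_inter_nbhd[OF G]) auto
  thus ?case using Suc by simp
qed

theorem theorem3:
  fixes V :: "'a set" and E :: "'a \<Rightarrow> 'a \<Rightarrow> bool" and vs :: "'a list"
  assumes G: "simple_graph V E"
    and B: "beta_sequence V E vs"
    and L: "length vs \<ge> 2"
    and D: "delta_set V E (common_nbhd V E (butlast vs))"
  shows "real (length vs) \<ge> W V E"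
proof -
  let ?S = "common_nbhd V E (butlast vs)"
  have "V \<inter> common_nbhd V E (take (length vs - 1) vs) = ?S"
    using D by (auto simp: delta_set_def butlast_conv_take)
  hence "W V E \<le> real (length vs - 1) + W_on V E ?S"
    using W_le_prefix_bound[OF G B, of "length vs - 1"] by simp
  also have "\<dots> \<le> real (length vs - 1) + 1"
    using W_on_delta_set_le_1[OF G D] by simp
  also have "\<dots> = real (length vs)" using L by simp
  finally show ?thesis .
qed

end
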